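(* Let $f$ be the map defined in the context. Then: (i) $f$ is continuous at every nega-$Q$-irrational point of $[a_0-1,a_0]$; (ii) if $q_n=q$ for all positive integers $n$, then $f$ is continuous at every point of $[a_0-1,a_0]$ (including all nega-$Q$-rational points); (iii) if $x_0=\Delta^{-Q}_{\varepsilon_1\ldots\varepsilon_{m-1}\varepsilon_m[q_{m+1}-1]0[q_{m+3}-1]0[q_{m+5}-1]\ldots}=\Delta^{-Q}_{\varepsilon_1\ldots\varepsilon_{m-1}[\varepsilon_m-1]0[q_{m+2}-1]0[q_{m+4}-1]0\ldots}$ (with $\varepsilon_m\ge 1$) is a nega-$Q$-rational point and there exists a positive integer $n>m$ with $q_n<q$, then $x_0$ is a point of discontinuity of $f$.
   Context: Let $Q=(q_k)_{k\ge1}$ be a sequence of integers with $q_k\ge 2$, and let $q\ge 2$ be an integer with $q_k\le q$ for all $k$. Put $a_0=\sum_{k\ge1}\frac{q_{2k}-1}{q_1q_2\cdots q_{2k}}$. Every $x\in[a_0-1,a_0]$ can be written as an alternating Cantor series (nega-$Q$-representation) $x=\Delta^{-Q}_{\varepsilon_1\varepsilon_2\ldots}:=\sum_{k\ge1}\frac{(-1)^k\varepsilon_k}{q_1q_2\cdots q_k}$ with digits $\varepsilon_k\in\{0,1,\ldots,q_k-1\}$. A point is called nega-$Q$-rational if it has two representations, namely $\Delta^{-Q}_{\varepsilon_1\ldots\varepsilon_{m-1}\varepsilon_m[q_{m+1}-1]0[q_{m+3}-1]0[q_{m+5}-1]\ldots}=\Delta^{-Q}_{\varepsilon_1\ldots\varepsilon_{m-1}[\varepsilon_m-1]0[q_{m+2}-1]0[q_{m+4}-1]0\ldots}$;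 all other points (nega-$Q$-irrational) have a unique representation. Convention: for nega-$Q$-rational points, only the first of these two representations (the one ending in $\varepsilon_m[q_{m+1}-1]0[q_{m+3}-1]0\ldots$) is used. The nega-$q$-ary representation is $\Delta^{-q}_{\alpha_1\alpha_2\ldots}:=\sum_{k\ge1}\frac{\alpha_k}{(-q)^k}$ with $\alpha_k\in\{0,\ldots,q-1\}$. The map $f:[a_0-1,a_0]\to\mathbb R$ is defined by $f\left(\Delta^{-Q}_{\varepsilon_1\varepsilon_2\ldots}\right)=\Delta^{-q}_{\varepsilon_1\varepsilon_2\ldots}=\sum_{n\ge1}\frac{\varepsilon_n}{(-q)^n}$. *)

theory Defs
  imports "HOL-Analysis.Analysis"
begin

text \<open>Sequences Q, digit sequences eps are functions nat => nat; only indices k >= 1 matter.\<close>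

definition prodQ :: "(nat \<Rightarrow> nat) \<Rightarrow> nat \<Rightarrow> real" where
  "prodQ Q k = (\<Prod>i\<in>{1..k}. real (Q i))"

definition valid_digits :: "(nat \<Rightarrow> nat) \<Rightarrow> (nat \<Rightarrow> nat) \<Rightarrow> bool" where
  "valid_digits Q eps \<longleftrightarrow> (\<forall>k\<ge>1. eps k < Q k)"

definition negaQ :: "(nat \<Rightarrow> nat) \<Rightarrow> (nat \<Rightarrow> nat) \<Rightarrow> real" where
  "negaQ Q eps = (\<Sum>n. (-1) ^ Suc n * real (eps (Suc n)) / prodQ Q (Suc n))"

definition negaq :: "nat \<Rightarrow> (nat \<Rightarrow> nat) \<Rightarrow> real" where
  "negaq q alpha = (\<Sum>n. real (alpha (Suc n)) / (- real q) ^ Suc n)"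

definition a0 :: "(nat \<Rightarrow> nat) \<Rightarrow> real" where
  "a0 Q = (\<Sum>n. (real (Q (2 * Suc n)) - 1) / prodQ Q (2 * Suc n))"

definition rational_pair :: "(nat \<Rightarrow> nat) \<Rightarrow> (nat \<Rightarrow> nat) \<Rightarrow> (nat \<Rightarrow> nat) \<Rightarrow> nat \<Rightarrow> bool" where
  "rational_pair Q eps eps' m \<longleftrightarrow>
     1 \<le> m \<and> 1 \<le> eps m \<and>
     (\<forall>k. 1 \<le> k \<and> k < m \<longrightarrow> eps' k = eps k) \<and>
     eps' m = eps m - 1 \<and>
     (\<forall>j. eps (m + 2*j + 1) = Q (m + 2*j + 1) - 1 \<and> eps (m + 2*j + 2) = 0) \<and>
     (\<forall>j. eps' (m + 2*j + 1) = 0 \<and> eps' (m + 2*j + 2) = Q (m + 2*j + 2) - 1)"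

definition negaQ_rational :: "(nat \<Rightarrow> nat) \<Rightarrow> real \<Rightarrow> bool" where
  "negaQ_rational Q x \<longleftrightarrow>
     (\<exists>eps eps' m. valid_digits Q eps \<and> valid_digits Q eps' \<and> rational_pair Q eps eps' m \<and>
        negaQ Q eps = x \<and> negaQ Q eps' = x)"

text \<open>The representation used by convention: an admissible representation of x which is not
  the second representation (eps') of a nega-Q-rational pair. Digits at index 0 are normalised to 0.\<close>
definition used_repr :: "(nat \<Rightarrow> nat) \<Rightarrow> (nat \<Rightarrow> nat) \<Rightarrow> bool" where
  "used_repr Q eps \<longleftrightarrow> valid_digits Q eps \<and> eps 0 = 0 \<and>
     \<not> (\<exists>e m. valid_digits Q e \<and> rational_pair Q e eps m)"

definition fmap :: "(nat \<Rightarrow> nat) \<Rightarrow> nat \<Rightarrow> real \<Rightarrow> real" where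
  "fmap Q q x = negaq q (THE eps. used_repr Q eps \<and> negaQ Q eps = x)"

end

theory Submission
  imports Defs
begin

text \<open>
  Admissible digit sequences take their values in \<open>[m, M]\<close>, where \<open>M = a\<^sub>0\<close> is attained by
  the maximal digits at the even places and \<open>m = M - 1\<close> by the maximal digits at the odd places;
  the same holds for every tail series.  If two sequences first differ at place \<open>n\<close>, their values
  differ by \<open>\<plusminus>(\<epsilon>\<^sub>n - \<epsilon>'\<^sub>n + tail difference) / (q\<^sub>1\<cdots>q\<^sub>n)\<close>, and since the tails lie in a unit
  interval, equal values force the two tails to be extremal, i.e. a nega-\<open>Q\<close>-rational pair.  With a
  greedy digit algorithm this shows that \<open>f\<close> is well defined.

  At an irrational point no tail of the representation is extremal, so nearby points share any
  prescribed number of leading digits, and the nega-\<open>q\<close>-ary value depends continuously on digit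
  prefixes.  For constant bases \<open>f\<close> is the identity.  At a rational point, \<open>f\<close> evaluates the two
  extremal tails with the weights \<open>q\<^sup>-\<^sup>k\<close> instead of \<open>(q\<^sub>m\<^sub>+\<^sub>1\<cdots>q\<^sub>m\<^sub>+\<^sub>k)\<^sup>-\<^sup>1\<close>; if some later
  \<open>q\<^sub>n < q\<close> their difference drops below \<open>1\<close>, so the two representations have different images,
  and truncations of the second one approach the point while their images approach the wrong value.
\<close>

section \<open>Tails and extremal digit sequences\<close>

definition cantor_bases :: "(nat \<Rightarrow> nat) \<Rightarrow> bool" where
  "cantor_bases Q \<longleftrightarrow> (\<forall>k\<ge>1. 2 \<le> Q k)"

definition shift_seq :: "nat \<Rightarrow> (nat \<Rightarrow> 'a) \<Rightarrow> nat \<Rightarrow> 'a" where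
  "shift_seq n f k = f (n + k)"

definition negaQ_term :: "(nat \<Rightarrow> nat) \<Rightarrow> (nat \<Rightarrow> nat) \<Rightarrow> nat \<Rightarrow> real" where
  "negaQ_term Q e k = (-1) ^ Suc k * real (e (Suc k)) / prodQ Q (Suc k)"

text \<open>The largest and smallest values: maximal digits exactly where \<open>(-1)\<^sup>k\<close> is positive
  resp. negative.\<close>

definition max_digits :: "(nat \<Rightarrow> nat) \<Rightarrow> nat \<Rightarrow> nat" where
  "max_digits Q k = (if even k then Q k - 1 else 0)"

definition min_digits :: "(nat \<Rightarrow> nat) \<Rightarrow> nat \<Rightarrow> nat" where
  "min_digits Q k = (if odd k then Q k - 1 else 0)"

definition negaQ_max :: "(nat \<Rightarrow> nat) \<Rightarrow> real" where
  "negaQ_max Q = negaQ Q (max_digits Q)"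

definition negaQ_min :: "(nat \<Rightarrow> nat) \<Rightarrow> real" where
  "negaQ_min Q = negaQ Q (min_digits Q)"

lemma cantor_bases_ge2: "cantor_bases Q \<Longrightarrow> 1 \<le> k \<Longrightarrow> 2 \<le> Q k"
  by (simp add: cantor_bases_def)

lemma cantor_bases_shift: "cantor_bases Q \<Longrightarrow> cantor_bases (shift_seq n Q)"
  by (simp add: cantor_bases_def shift_seq_def)

lemma cantor_bases_const: "2 \<le> q \<Longrightarrow> cantor_bases (\<lambda>_. q)"
  by (simp add: cantor_bases_def)

lemma shift_seq_0 [simp]: "shift_seq 0 f = f"
  by (simp add: shift_seq_def fun_eq_iff)

lemma shift_seq_shift_seq [simp]: "shift_seq n (shift_seq m f) = shift_seq (m + n) f"
  by (simp add: shift_seq_def fun_eq_iff add.assoc)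

lemma shift_seq_const [simp]: "shift_seq n (\<lambda>_. c) = (\<lambda>_. c)"
  by (simp add: shift_seq_def fun_eq_iff)

lemma shift_seq_Suc_0 [simp]: "shift_seq n f (Suc 0) = f (Suc n)"
  by (simp add: shift_seq_def)

lemma valid_digits_shift: "valid_digits Q e \<Longrightarrow> valid_digits (shift_seq n Q) (shift_seq n e)"
  by (simp add: valid_digits_def shift_seq_def)

lemma valid_digits_mono_bases:
  "valid_digits Q e \<Longrightarrow> \<forall>k\<ge>1. Q k \<le> Q' k \<Longrightarrow> valid_digits Q' e"
  unfolding valid_digits_def by (meson less_le_trans)

lemma valid_max_digits: "cantor_bases Q \<Longrightarrow> valid_digits Q (max_digits Q)"
  by (fastforce simp: valid_digits_def max_digits_def cantor_bases_def)

lemma valid_min_digits: "cantor_bases Q \<Longrightarrow> valid_digits Q (min_digits Q)"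
  by (fastforce simp: valid_digits_def min_digits_def cantor_bases_def)

lemma prodQ_0 [simp]: "prodQ Q 0 = 1"
  by (simp add: prodQ_def)

lemma prodQ_Suc: "prodQ Q (Suc k) = prodQ Q k * real (Q (Suc k))"
  by (simp add: prodQ_def prod.nat_ivl_Suc' mult.commute)

lemma prodQ_add: "prodQ Q (n + k) = prodQ Q n * prodQ (shift_seq n Q) k"
  by (induction k) (simp_all add: prodQ_Suc shift_seq_def)

lemma prodQ_ge_power2: "cantor_bases Q \<Longrightarrow> 2 ^ k \<le> prodQ Q k"
proof (induction k)
  case (Suc k)
  have "0 \<le> prodQ Q k"
    using Suc by (smt (verit) zero_le_power)
  then have "2 ^ k * 2 \<le> prodQ Q k * real (Q (Suc k))"
    using Suc cantor_bases_ge2[OF Suc.prems, of "Suc k"] by (intro mult_mono) auto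
  then show ?case by (simp add: prodQ_Suc mult.commute)
qed simp

lemma prodQ_pos: "cantor_bases Q \<Longrightarrow> 0 < prodQ Q k"
  using prodQ_ge_power2[of Q k] by (smt (verit) zero_less_power)

lemma inverse_prodQ_le: "cantor_bases Q \<Longrightarrow> 1 / prodQ Q k \<le> (1 / 2) ^ k"
  using prodQ_ge_power2[of Q k] by (simp add: power_one_over frac_le)

lemma inverse_prodQ_LIMSEQ: "cantor_bases Q \<Longrightarrow> (\<lambda>k. 1 / prodQ Q k) \<longlonglongrightarrow> 0"
proof (rule Lim_null_comparison[of _ "\<lambda>k. (1 / 2) ^ k"])
  assume "cantor_bases Q"
  then show "\<forall>\<^sub>F k in sequentially. norm (1 / prodQ Q k) \<le> (1 / 2) ^ k"
    using inverse_prodQ_le prodQ_pos by (auto intro!: always_eventually simp: abs_of_pos)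
qed (rule LIMSEQ_power_zero, simp_all)

lemma sums_max_terms_one:
  assumes "cantor_bases Q"
  shows "(\<lambda>k. (real (Q (Suc k)) - 1) / prodQ Q (Suc k)) sums 1"
proof -
  have "(\<lambda>k. - 1 / prodQ Q k) \<longlonglongrightarrow> 0"
    using tendsto_minus[OF inverse_prodQ_LIMSEQ[OF assms]] by simp
  then have "(\<lambda>k. - 1 / prodQ Q (Suc k) - - 1 / prodQ Q k) sums (0 - - 1 / prodQ Q 0)"
    by (rule telescope_sums)
  moreover have "- 1 / prodQ Q (Suc k) - - 1 / prodQ Q k = (real (Q (Suc k)) - 1) / prodQ Q (Suc k)" for k
    using prodQ_pos[OF assms, of k] cantor_bases_ge2[OF assms, of "Suc k"]
    by (simp add: prodQ_Suc field_simps)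
  ultimately show ?thesis by simp
qed

lemma abs_negaQ_term_le:
  assumes "valid_digits Q e" "cantor_bases Q"
  shows "\<bar>negaQ_term Q e k\<bar> \<le> (real (Q (Suc k)) - 1) / prodQ Q (Suc k)"
proof -
  have "e (Suc k) < Q (Suc k)" using assms(1) by (simp add: valid_digits_def)
  then have "real (e (Suc k)) \<le> real (Q (Suc k)) - 1" by linarith
  moreover have P: "0 < prodQ Q (Suc k)" using prodQ_pos[OF assms(2)] .
  ultimately have "real (e (Suc k)) / prodQ Q (Suc k) \<le> (real (Q (Suc k)) - 1) / prodQ Q (Suc k)"
    by (simp add: divide_right_mono)
  then show ?thesis using P by (simp add: negaQ_term_def abs_mult)
qed

lemma negaQ_term_sums:
  assumes "valid_digits Q e" "cantor_bases Q"
  shows "negaQ_term Q e sums negaQ Q e"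
proof -
  have "summable (\<lambda>k. \<bar>negaQ_term Q e k\<bar>)"
    by (rule summable_comparison_test[OF _ sums_summable[OF sums_max_terms_one[OF assms(2)]]])
       (use abs_negaQ_term_le[OF assms] in auto)
  then have "summable (negaQ_term Q e)" by (rule summable_rabs_cancel)
  then show ?thesis
    unfolding negaQ_def negaQ_term_def[symmetric] by (rule summable_sums)
qed

lemma negaQ_cong: "\<forall>k\<ge>1. e k = d k \<Longrightarrow> negaQ Q e = negaQ Q d"
  by (simp add: negaQ_def)

lemma negaQ_fun_upd_0 [simp]: "negaQ Q (e(0 := c)) = negaQ Q e"
  by (rule negaQ_cong) simp

lemma negaQ_cong_bases: "\<forall>k\<ge>1. Q k = Q' k \<Longrightarrow> negaQ Q e = negaQ Q' e"
proof -
  assume "\<forall>k\<ge>1. Q k = Q' k"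
  then have "prodQ Q k = prodQ Q' k" for k unfolding prodQ_def by (intro prod.cong) auto
  then show ?thesis unfolding negaQ_def by simp
qed

lemma negaQ_split:
  assumes "valid_digits Q e" "cantor_bases Q"
  shows "negaQ Q e = (\<Sum>k<n. negaQ_term Q e k)
    + (-1) ^ n / prodQ Q n * negaQ (shift_seq n Q) (shift_seq n e)"
proof -
  have tail: "negaQ_term Q e (k + n)
      = (-1) ^ n / prodQ Q n * negaQ_term (shift_seq n Q) (shift_seq n e) k" for k
    using prodQ_add[of Q n "Suc k"]
    by (simp add: negaQ_term_def shift_seq_def power_add add.commute)
  have "(\<lambda>k. negaQ_term Q e (k + n)) sums (negaQ Q e - (\<Sum>k<n. negaQ_term Q e k))"
    using sums_split_initial_segment[OF negaQ_term_sums[OF assms]] .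
  moreover have "(\<lambda>k. negaQ_term Q e (k + n))
      sums ((-1) ^ n / prodQ Q n * negaQ (shift_seq n Q) (shift_seq n e))"
    unfolding tail
    by (intro sums_mult negaQ_term_sums valid_digits_shift cantor_bases_shift assms)
  ultimately show ?thesis
    using sums_unique2 by fastforce
qed

lemma negaQ_term_le_max:
  assumes "valid_digits Q e" "cantor_bases Q"
  shows "negaQ_term Q e k \<le> negaQ_term Q (max_digits Q) k"
proof -
  have "e (Suc k) < Q (Suc k)" using assms(1) by (simp add: valid_digits_def)
  then show ?thesis
    using prodQ_pos[OF assms(2), of "Suc k"]
    by (cases "even k") (auto simp: negaQ_term_def max_digits_def divide_right_mono)
qed

lemma negaQ_term_ge_min:
  assumes "valid_digits Q e" "cantor_bases Q"
  shows "negaQ_term Q (min_digits Q) k \<le> negaQ_term Q e k"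
proof -
  have e: "e (Suc k) < Q (Suc k)" using assms(1) by (simp add: valid_digits_def)
  then have "1 + real (e (Suc k)) \<le> real (Q (Suc k))" by linarith
  moreover have P: "0 < prodQ Q (Suc k)" using prodQ_pos[OF assms(2)] .
  ultimately have "prodQ Q (Suc k) * (1 + real (e (Suc k))) \<le> prodQ Q (Suc k) * real (Q (Suc k))"
    by (simp add: mult_left_mono)
  then show ?thesis
    using P e by (cases "even k") (auto simp: negaQ_term_def min_digits_def field_simps)
qed

lemma negaQ_le_termwise:
  assumes d: "valid_digits Q d" and e: "valid_digits Q e" and Q: "cantor_bases Q"
    and le: "\<And>k. negaQ_term Q d k \<le> negaQ_term Q e k"
  shows "negaQ Q d \<le> negaQ Q e"
    and "negaQ Q d = negaQ Q e \<longleftrightarrow> (\<forall>k\<ge>1. d k = e k)"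
proof -
  let ?f = "\<lambda>k. negaQ_term Q e k - negaQ_term Q d k"
  have f: "?f sums (negaQ Q e - negaQ Q d)"
    by (intro sums_diff negaQ_term_sums d e Q)
  have nonneg: "0 \<le> ?f k" for k
    using le[of k] by simp
  show "negaQ Q d \<le> negaQ Q e"
    using sums_le[OF nonneg sums_zero f] by simp
  have zero_iff: "?f k = 0 \<longleftrightarrow> d (Suc k) = e (Suc k)" for k
    using prodQ_pos[OF Q, of "Suc k"] by (auto simp: negaQ_term_def)
  have "negaQ Q d = negaQ Q e \<longleftrightarrow> suminf ?f = 0"
    using sums_unique[OF f] by linarith
  also have "\<dots> \<longleftrightarrow> (\<forall>k. d (Suc k) = e (Suc k))"
    using suminf_eq_zero_iff[OF sums_summable[OF f] nonneg] zero_iff by simp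
  also have "\<dots> \<longleftrightarrow> (\<forall>k\<ge>1. d k = e k)"
    by (auto dest: Suc_le_D)
  finally show "negaQ Q d = negaQ Q e \<longleftrightarrow> (\<forall>k\<ge>1. d k = e k)" .
qed

lemma
  assumes "valid_digits Q e" "cantor_bases Q"
  shows negaQ_le_max: "negaQ Q e \<le> negaQ_max Q"
    and negaQ_eq_max_iff: "negaQ Q e = negaQ_max Q \<longleftrightarrow> (\<forall>k\<ge>1. e k = max_digits Q k)"
  using negaQ_le_termwise[OF assms(1) valid_max_digits[OF assms(2)] assms(2)]
    negaQ_term_le_max[OF assms] unfolding negaQ_max_def by blast+

lemma
  assumes "valid_digits Q e" "cantor_bases Q"
  shows negaQ_ge_min: "negaQ_min Q \<le> negaQ Q e"
    and negaQ_eq_min_iff: "negaQ Q e = negaQ_min Q \<longleftrightarrow> (\<forall>k\<ge>1. e k = min_digits Q k)"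
  using negaQ_le_termwise[OF valid_min_digits[OF assms(2)] assms(1) assms(2)]
    negaQ_term_ge_min[OF assms] unfolding negaQ_min_def by (blast, metis)

lemma sums_negaQ_max_minus_min:
  assumes Q': "cantor_bases Q'" and Q: "cantor_bases Q" and le: "\<forall>k\<ge>1. Q k \<le> Q' k"
  shows "(\<lambda>k. (real (Q (Suc k)) - 1) / prodQ Q' (Suc k))
    sums (negaQ Q' (max_digits Q) - negaQ Q' (min_digits Q))"
proof -
  have diff: "negaQ_term Q' (max_digits Q) k - negaQ_term Q' (min_digits Q) k
      = (real (Q (Suc k)) - 1) / prodQ Q' (Suc k)" for k
    using cantor_bases_ge2[OF Q, of "Suc k"]
    by (cases "even k") (simp_all add: negaQ_term_def max_digits_def min_digits_def
        of_nat_diff diff_divide_distrib)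
  have "valid_digits Q' (max_digits Q)" "valid_digits Q' (min_digits Q)"
    using valid_max_digits[OF Q] valid_min_digits[OF Q] le by (auto intro: valid_digits_mono_bases)
  then have "(\<lambda>k. negaQ_term Q' (max_digits Q) k - negaQ_term Q' (min_digits Q) k)
      sums (negaQ Q' (max_digits Q) - negaQ Q' (min_digits Q))"
    by (intro sums_diff negaQ_term_sums Q')
  then show ?thesis unfolding diff .
qed

lemma negaQ_max_minus_min: "cantor_bases Q \<Longrightarrow> negaQ_max Q - negaQ_min Q = 1"
  using sums_unique2[OF sums_negaQ_max_minus_min[of Q Q] sums_max_terms_one]
  unfolding negaQ_max_def negaQ_min_def by simp

lemma negaQ_max_bounds:
  assumes "cantor_bases Q"
  shows "0 \<le> negaQ_max Q" "negaQ_max Q \<le> 1"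
proof -
  have "0 < Q k" if "1 \<le> k" for k
    using cantor_bases_ge2[OF assms that] by simp
  then have zero: "valid_digits Q (\<lambda>_. 0)" "negaQ Q (\<lambda>_. 0) = 0"
    by (simp_all add: valid_digits_def negaQ_def)
  show "0 \<le> negaQ_max Q"
    using negaQ_le_max[OF zero(1) assms] zero(2) by simp
  show "negaQ_max Q \<le> 1"
    using negaQ_ge_min[OF zero(1) assms] zero(2) negaQ_max_minus_min[OF assms] by simp
qed

lemma a0_eq_negaQ_max:
  assumes "cantor_bases Q"
  shows "a0 Q = negaQ_max Q"
proof -
  have "negaQ_term Q (max_digits Q) n = 0" if "n \<notin> range (\<lambda>n. 2 * n + 1)" for n
    using that by (auto simp: negaQ_term_def max_digits_def elim!: oddE)
  moreover have "strict_mono (\<lambda>n::nat. 2 * n + 1)"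
    by (rule strict_monoI) simp
  ultimately have "(\<lambda>n. negaQ_term Q (max_digits Q) (2 * n + 1)) sums negaQ_max Q"
    using negaQ_term_sums[OF valid_max_digits[OF assms] assms] sums_mono_reindex
    unfolding negaQ_max_def by blast
  moreover have "negaQ_term Q (max_digits Q) (2 * n + 1)
      = (real (Q (2 * Suc n)) - 1) / prodQ Q (2 * Suc n)" for n
    using cantor_bases_ge2[OF assms, of "2 * Suc n"] by (simp add: negaQ_term_def max_digits_def of_nat_diff)
  ultimately show ?thesis
    unfolding a0_def using sums_unique by fastforce
qed

lemma negaQ_interval:
  "cantor_bases Q \<Longrightarrow> {a0 Q - 1..a0 Q} = {negaQ_min Q..negaQ_max Q}"
  using a0_eq_negaQ_max[of Q] negaQ_max_minus_min[of Q] by (simp add: algebra_simps)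

section \<open>Uniqueness of representations up to rational pairs\<close>

lemma negaQ_diff_first_difference:
  assumes e: "valid_digits Q e" and d: "valid_digits Q d" and Q: "cantor_bases Q" and n: "1 \<le> n"
    and agree: "\<forall>k. 1 \<le> k \<and> k < n \<longrightarrow> e k = d k"
  shows "negaQ Q e - negaQ Q d = (-1) ^ n / prodQ Q n *
    (real (e n) - real (d n) + (negaQ (shift_seq n Q) (shift_seq n e) - negaQ (shift_seq n Q) (shift_seq n d)))"
proof -
  obtain m where m: "n = Suc m" using n by (cases n) auto
  have "(\<Sum>k<m. negaQ_term Q e k) = (\<Sum>k<m. negaQ_term Q d k)"
    using agree m by (intro sum.cong) (auto simp: negaQ_term_def)
  then have "negaQ Q e - negaQ Q d = negaQ_term Q e m - negaQ_term Q d m + (-1) ^ n / prodQ Q n *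
      (negaQ (shift_seq n Q) (shift_seq n e) - negaQ (shift_seq n Q) (shift_seq n d))"
    using negaQ_split[OF e Q, of n] negaQ_split[OF d Q, of n] m by (simp add: right_diff_distrib)
  also have "negaQ_term Q e m - negaQ_term Q d m = (-1) ^ n / prodQ Q n * (real (e n) - real (d n))"
    using m by (simp add: negaQ_term_def diff_divide_distrib right_diff_distrib)
  finally show ?thesis by (simp add: distrib_left)
qed

lemma all_ge1_iff_odd_even: "(\<forall>i::nat\<ge>1. P i) \<longleftrightarrow> (\<forall>j. P (2 * j + 1) \<and> P (2 * j + 2))"
proof (intro iffI allI impI)
  fix i :: nat
  assume all: "\<forall>j. P (2 * j + 1) \<and> P (2 * j + 2)" and "1 \<le> i"
  then have "i = 2 * (i div 2) + 1 \<or> i = 2 * (i div 2 - 1) + 2"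
    by presburger
  then show "P i" using all by metis
qed auto

lemma tail_min_digits_iff:
  "(\<forall>j. e (m + 2 * j + 1) = Q (m + 2 * j + 1) - 1 \<and> e (m + 2 * j + 2) = 0)
    \<longleftrightarrow> (\<forall>i\<ge>1. shift_seq m e i = min_digits (shift_seq m Q) i)"
  by (simp only: all_ge1_iff_odd_even) (simp add: shift_seq_def min_digits_def add.assoc)

lemma tail_max_digits_iff:
  "(\<forall>j. e (m + 2 * j + 1) = 0 \<and> e (m + 2 * j + 2) = Q (m + 2 * j + 2) - 1)
    \<longleftrightarrow> (\<forall>i\<ge>1. shift_seq m e i = max_digits (shift_seq m Q) i)"
  by (simp only: all_ge1_iff_odd_even) (simp add: shift_seq_def max_digits_def add.assoc)

lemma rational_pair_iff:
  "rational_pair Q e e' m \<longleftrightarrow> 1 \<le> m \<and> 1 \<le> e m \<and> (\<forall>k. 1 \<le> k \<and> k < m \<longrightarrow> e' k = e k)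
    \<and> e' m = e m - 1
    \<and> (\<forall>i\<ge>1. shift_seq m e i = min_digits (shift_seq m Q) i)
    \<and> (\<forall>i\<ge>1. shift_seq m e' i = max_digits (shift_seq m Q) i)"
  unfolding rational_pair_def tail_min_digits_iff tail_max_digits_iff by auto

lemma negaQ_shift_bounds:
  assumes "valid_digits Q e" "cantor_bases Q"
  shows "negaQ_min (shift_seq n Q) \<le> negaQ (shift_seq n Q) (shift_seq n e)"
    and "negaQ (shift_seq n Q) (shift_seq n e) \<le> negaQ_max (shift_seq n Q)"
  using negaQ_ge_min negaQ_le_max valid_digits_shift cantor_bases_shift assms by blast+

lemma rational_pair_negaQ_eq:
  assumes e: "valid_digits Q e" and e': "valid_digits Q e'" and Q: "cantor_bases Q"
    and pair: "rational_pair Q e e' m"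
  shows "negaQ Q e = negaQ Q e'"
proof -
  have m: "1 \<le> m" and pre: "\<forall>k. 1 \<le> k \<and> k < m \<longrightarrow> e k = e' k"
    and digit: "real (e m) - real (e' m) = 1"
    and tails: "negaQ (shift_seq m Q) (shift_seq m e) = negaQ_min (shift_seq m Q)"
      "negaQ (shift_seq m Q) (shift_seq m e') = negaQ_max (shift_seq m Q)"
    using pair unfolding rational_pair_iff negaQ_min_def negaQ_max_def
    by (auto intro: negaQ_cong)
  show ?thesis
    using negaQ_diff_first_difference[OF e e' Q m pre] digit tails
      negaQ_max_minus_min[OF cantor_bases_shift[OF Q, of m]] by (simp add: diff_eq_eq)
qed

lemma abs_negaQ_diff_le_common_prefix:
  assumes e: "valid_digits Q e" and d: "valid_digits Q d" and Q: "cantor_bases Q"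
    and agree: "\<forall>k. 1 \<le> k \<and> k \<le> N \<longrightarrow> e k = d k"
  shows "\<bar>negaQ Q e - negaQ Q d\<bar> \<le> 1 / prodQ Q N"
proof -
  let ?Q = "shift_seq N Q"
  have "(\<Sum>k<N. negaQ_term Q e k) = (\<Sum>k<N. negaQ_term Q d k)"
    using agree by (intro sum.cong) (auto simp: negaQ_term_def)
  then have "negaQ Q e - negaQ Q d
      = (-1) ^ N / prodQ Q N * (negaQ ?Q (shift_seq N e) - negaQ ?Q (shift_seq N d))"
    using negaQ_split[OF e Q, of N] negaQ_split[OF d Q, of N] by (simp add: right_diff_distrib)
  moreover have "\<bar>negaQ ?Q (shift_seq N e) - negaQ ?Q (shift_seq N d)\<bar> \<le> 1"
    using negaQ_shift_bounds[OF e Q, of N] negaQ_shift_bounds[OF d Q, of N]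
      negaQ_max_minus_min[OF cantor_bases_shift[OF Q, of N]] by linarith
  moreover have "0 < prodQ Q N" using prodQ_pos[OF Q] .
  ultimately show ?thesis
    by (simp add: abs_mult power_abs divide_right_mono)
qed

lemma rational_pair_first_not_second:
  assumes Q: "cantor_bases Q" and e0: "valid_digits Q e0"
    and pair: "rational_pair Q e e' m" and pair0: "rational_pair Q e0 e m'"
  shows False
proof -
  have em: "1 \<le> e m" and tail: "\<And>i. 1 \<le> i \<Longrightarrow> e (m + i) = (if odd i then Q (m + i) - 1 else 0)"
    using pair unfolding rational_pair_iff by (auto simp: shift_seq_def min_digits_def)
  have m': "1 \<le> m'" and em': "e m' = e0 m' - 1"
    and tail0: "\<And>i. 1 \<le> i \<Longrightarrow> e (m' + i) = (if odd i then 0 else Q (m' + i) - 1)"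
    using pair0 unfolding rational_pair_iff by (auto simp: shift_seq_def max_digits_def)
  have Q2: "2 \<le> Q (k + 1)" for k using cantor_bases_ge2[OF Q] by simp
  have "e0 m' < Q m'" using e0 m' by (simp add: valid_digits_def)
  then have em'_lt: "e m' < Q m' - 1" using em' m' cantor_bases_ge2[OF Q m'] by linarith
  show False
  proof (cases "m \<le> m'")
    case True
    then obtain d where d: "m' = m + d" using le_Suc_ex by blast
    show False
    proof (cases "even d")
      case True
      then show False using tail[of "d + 1"] tail0[of 1] Q2[of "m + d"] d by simp
    next
      case False
      then show False using tail[of d] em'_lt d by (cases d) auto
    qed
  next
    case False
    then obtain d where d: "m = m' + d" "1 \<le> d" by (metis le_add_diff_inverse less_imp_le_nat
          linorder_not_le zero_less_diff less_one)
    show False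
    proof (cases "even d")
      case True
      then show False using tail[of 1] tail0[of "d + 1"] Q2[of m] d by (simp add: add.assoc)
    next
      case False
      then show False using tail0[of d] em d by simp
    qed
  qed
qed

lemma rational_pair_of_negaQ_eq:
  assumes e: "valid_digits Q e" and d: "valid_digits Q d" and Q: "cantor_bases Q" and n: "1 \<le> n"
    and agree: "\<forall>k. 1 \<le> k \<and> k < n \<longrightarrow> e k = d k" and less: "d n < e n"
    and eq: "negaQ Q e = negaQ Q d"
  shows "rational_pair Q e d n"
proof -
  let ?Q = "shift_seq n Q"
  have "real (e n) - real (d n) + (negaQ ?Q (shift_seq n e) - negaQ ?Q (shift_seq n d)) = 0"
    using negaQ_diff_first_difference[OF e d Q n agree] eq prodQ_pos[OF Q, of n] by simp
  then have "e n = d n + 1" and "negaQ ?Q (shift_seq n e) = negaQ_min ?Q"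
    and "negaQ ?Q (shift_seq n d) = negaQ_max ?Q"
    using less negaQ_shift_bounds[OF e Q, of n] negaQ_shift_bounds[OF d Q, of n]
      negaQ_max_minus_min[OF cantor_bases_shift[OF Q, of n]] by linarith+
  then show ?thesis
    unfolding rational_pair_iff
    using n agree negaQ_eq_min_iff[OF valid_digits_shift[OF e] cantor_bases_shift[OF Q]]
      negaQ_eq_max_iff[OF valid_digits_shift[OF d] cantor_bases_shift[OF Q]] by auto
qed

lemma used_repr_unique:
  assumes e: "used_repr Q e" and d: "used_repr Q d" and Q: "cantor_bases Q"
    and eq: "negaQ Q e = negaQ Q d"
  shows "e = d"
proof (rule ccontr)
  assume "e \<noteq> d"
  then have ex: "\<exists>k. e k \<noteq> d k" by auto
  define n where "n = (LEAST k. e k \<noteq> d k)"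
  have neq: "e n \<noteq> d n" unfolding n_def by (rule LeastI_ex[OF ex])
  have agree: "\<forall>k. 1 \<le> k \<and> k < n \<longrightarrow> e k = d k"
    unfolding n_def using not_less_Least by blast
  have ve: "valid_digits Q e" and vd: "valid_digits Q d" and "e 0 = 0" "d 0 = 0"
    using e d unfolding used_repr_def by auto
  with neq have n: "1 \<le> n" by (cases n) auto
  show False
  proof (cases "d n < e n")
    case True
    then have "rational_pair Q e d n"
      using rational_pair_of_negaQ_eq[OF ve vd Q n agree _ eq] by blast
    then show False using d ve unfolding used_repr_def by blast
  next
    case False
    then have "rational_pair Q d e n"
      using rational_pair_of_negaQ_eq[OF vd ve Q n _ _ eq[symmetric]] neq agree by auto
    then show False using e vd unfolding used_repr_def by blast
  qed
qed

section \<open>Existence of representations and evaluation of \<open>f\<close>\<close>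

lemma negaQ_first_digit:
  assumes "valid_digits Q e" "cantor_bases Q"
  shows "negaQ Q e = - (real (e 1) + negaQ (shift_seq 1 Q) (shift_seq 1 e)) / real (Q 1)"
  using negaQ_split[OF assms, of 1]
  by (simp add: prodQ_def negaQ_term_def diff_divide_distrib)

lemma negaQ_max_rec:
  "cantor_bases Q \<Longrightarrow> negaQ_max Q = - negaQ_min (shift_seq 1 Q) / real (Q 1)"
  unfolding negaQ_max_def negaQ_min_def
  by (subst negaQ_first_digit[OF valid_max_digits])
     (auto simp: max_digits_def min_digits_def shift_seq_def intro!: arg_cong[where f = "negaQ _"])

lemma negaQ_min_rec:
  assumes "cantor_bases Q"
  shows "negaQ_min Q = - (real (Q 1) - 1 + negaQ_max (shift_seq 1 Q)) / real (Q 1)"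
  unfolding negaQ_max_def negaQ_min_def
  using cantor_bases_ge2[OF assms, of 1]
  by (subst negaQ_first_digit[OF valid_min_digits[OF assms] assms])
     (auto simp: max_digits_def min_digits_def shift_seq_def of_nat_diff
       intro!: arg_cong[where f = "negaQ _"])

text \<open>Writing \<open>x = -(c + y) / q\<^sub>1\<close>, the digit \<open>c\<close> is chosen so that \<open>y\<close> lies in the unit interval
  of values of the shifted series.\<close>

definition greedy_digit :: "(nat \<Rightarrow> nat) \<Rightarrow> real \<Rightarrow> nat" where
  "greedy_digit Q x = nat \<lceil>- real (Q 1) * x - negaQ_max (shift_seq 1 Q)\<rceil>"

lemma greedy_digit_step:
  assumes Q: "cantor_bases Q" and x: "x \<in> {negaQ_min Q..negaQ_max Q}"
  shows "greedy_digit Q x < Q 1"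
    and "- real (Q 1) * x - real (greedy_digit Q x) \<in> {negaQ_min (shift_seq 1 Q)..negaQ_max (shift_seq 1 Q)}"
proof -
  let ?max = "negaQ_max (shift_seq 1 Q)" and ?min = "negaQ_min (shift_seq 1 Q)"
  define y where "y = - real (Q 1) * x - ?max"
  have q1: "2 \<le> real (Q 1)" using cantor_bases_ge2[OF Q, of 1] by simp
  have width: "?max - ?min = 1" using negaQ_max_minus_min[OF cantor_bases_shift[OF Q]] .
  have "x \<le> - ?min / real (Q 1)" "- (real (Q 1) - 1 + ?max) / real (Q 1) \<le> x"
    using x negaQ_max_rec[OF Q] negaQ_min_rec[OF Q] by simp_all
  then have y: "-1 \<le> y" "y \<le> real (Q 1) - 1"
    using q1 width unfolding y_def by (simp_all add: field_simps)
  have digit: "greedy_digit Q x = nat \<lceil>y\<rceil>" unfolding greedy_digit_def y_def ..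
  have "y \<le> real_of_int (int (Q 1) - 1)" using y(2) by simp
  then have "\<lceil>y\<rceil> \<le> int (Q 1) - 1" by (rule ceiling_le)
  then show "greedy_digit Q x < Q 1" unfolding digit using q1 by linarith
  have "-1 \<le> y - real (greedy_digit Q x) \<and> y - real (greedy_digit Q x) \<le> 0"
  proof (cases "0 \<le> \<lceil>y\<rceil>")
    case True
    then show ?thesis unfolding digit by (simp add: ceiling_correct) linarith
  next
    case False
    then show ?thesis unfolding digit using y(1) by simp
  qed
  then show "- real (Q 1) * x - real (greedy_digit Q x) \<in> {?min..?max}"
    using y(1) width unfolding y_def by auto
qed

fun greedy_remainder :: "(nat \<Rightarrow> nat) \<Rightarrow> real \<Rightarrow> nat \<Rightarrow> real" where
  "greedy_remainder Q x 0 = x"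
| "greedy_remainder Q x (Suc n) = - real (Q (Suc n)) * greedy_remainder Q x n
    - real (greedy_digit (shift_seq n Q) (greedy_remainder Q x n))"

definition greedy_digits :: "(nat \<Rightarrow> nat) \<Rightarrow> real \<Rightarrow> nat \<Rightarrow> nat" where
  "greedy_digits Q x k = (if k = 0 then 0 else greedy_digit (shift_seq (k - 1) Q) (greedy_remainder Q x (k - 1)))"

lemma greedy_remainder_bounds:
  assumes Q: "cantor_bases Q" and x: "x \<in> {negaQ_min Q..negaQ_max Q}"
  shows "greedy_remainder Q x n \<in> {negaQ_min (shift_seq n Q)..negaQ_max (shift_seq n Q)}"
proof (induction n)
  case (Suc n)
  then show ?case
    using greedy_digit_step(2)[OF cantor_bases_shift[OF Q] Suc.IH] by simp
qed (use x in simp)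

lemma valid_greedy_digits:
  assumes Q: "cantor_bases Q" and x: "x \<in> {negaQ_min Q..negaQ_max Q}"
  shows "valid_digits Q (greedy_digits Q x)"
  unfolding valid_digits_def
proof (intro allI impI)
  fix k :: nat assume "1 \<le> k"
  then obtain n where n: "k = Suc n" by (cases k) auto
  show "greedy_digits Q x k < Q k"
    using greedy_digit_step(1)[OF cantor_bases_shift[OF Q] greedy_remainder_bounds[OF Q x, of n]]
    by (simp add: greedy_digits_def n)
qed

lemma greedy_partial_sums:
  assumes Q: "cantor_bases Q"
  shows "x = (\<Sum>k<n. negaQ_term Q (greedy_digits Q x) k) + (-1) ^ n / prodQ Q n * greedy_remainder Q x n"
proof (induction n)
  case (Suc n)
  have "(-1) ^ n / prodQ Q n * greedy_remainder Q x n
      = negaQ_term Q (greedy_digits Q x) n + (-1) ^ Suc n / prodQ Q (Suc n) * greedy_remainder Q x (Suc n)"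
    using prodQ_pos[OF Q, of n] cantor_bases_ge2[OF Q, of "Suc n"]
    by (simp add: negaQ_term_def greedy_digits_def prodQ_Suc field_simps)
  then show ?case using Suc.IH by simp
qed simp

lemma negaQ_greedy_digits:
  assumes Q: "cantor_bases Q" and x: "x \<in> {negaQ_min Q..negaQ_max Q}"
  shows "negaQ Q (greedy_digits Q x) = x"
proof -
  let ?r = "\<lambda>n. (-1) ^ n / prodQ Q n * greedy_remainder Q x n"
  have "\<bar>greedy_remainder Q x n\<bar> \<le> 1" for n
    using greedy_remainder_bounds[OF Q x, of n] negaQ_max_bounds[OF cantor_bases_shift[OF Q, of n]]
      negaQ_max_minus_min[OF cantor_bases_shift[OF Q, of n]] by auto
  then have "norm (?r n) \<le> 1 / prodQ Q n" for n
    using prodQ_pos[OF Q, of n] by (simp add: abs_mult power_abs divide_right_mono)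
  then have "?r \<longlonglongrightarrow> 0"
    by (intro Lim_null_comparison[OF _ inverse_prodQ_LIMSEQ[OF Q]] always_eventually) simp
  then have "(\<lambda>n. x - ?r n) \<longlonglongrightarrow> x"
    using tendsto_diff[OF tendsto_const] by fastforce
  moreover have "(\<lambda>n. x - ?r n) = (\<lambda>n. \<Sum>k<n. negaQ_term Q (greedy_digits Q x) k)"
    using greedy_partial_sums[OF Q] by (simp add: fun_eq_iff algebra_simps)
  ultimately show ?thesis
    using negaQ_term_sums[OF valid_greedy_digits[OF Q x] Q] LIMSEQ_unique sums_def by metis
qed

lemma used_repr_of_rational_pair:
  assumes Q: "cantor_bases Q" and e: "valid_digits Q e" and pair: "rational_pair Q e e' m"
  shows "used_repr Q (e(0 := 0))"
proof -
  have "rational_pair Q (e(0 := 0)) e' m"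
    using pair unfolding rational_pair_def by auto
  then show ?thesis
    using e rational_pair_first_not_second[OF Q] unfolding used_repr_def valid_digits_def by auto
qed

lemma ex_used_repr:
  assumes Q: "cantor_bases Q" and x: "x \<in> {negaQ_min Q..negaQ_max Q}"
  shows "\<exists>e. used_repr Q e \<and> negaQ Q e = x"
proof (cases "\<exists>e m. valid_digits Q e \<and> rational_pair Q e (greedy_digits Q x) m")
  case True
  then obtain e m where e: "valid_digits Q e" and pair: "rational_pair Q e (greedy_digits Q x) m"
    by blast
  have "negaQ Q (e(0 := 0)) = x"
    using rational_pair_negaQ_eq[OF e valid_greedy_digits[OF Q x] Q pair] negaQ_greedy_digits[OF Q x]
    by simp
  then show ?thesis using used_repr_of_rational_pair[OF Q e pair] by blast
next
  case False
  then have "used_repr Q (greedy_digits Q x)"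
    using valid_greedy_digits[OF Q x] by (simp add: used_repr_def greedy_digits_def)
  then show ?thesis using negaQ_greedy_digits[OF Q x] by blast
qed

lemma fmap_negaQ:
  assumes "cantor_bases Q" "used_repr Q e"
  shows "fmap Q q (negaQ Q e) = negaq q e"
proof -
  have "(THE d. used_repr Q d \<and> negaQ Q d = negaQ Q e) = e"
    using assms used_repr_unique by (intro the_equality) auto
  then show ?thesis unfolding fmap_def by simp
qed

lemma negaq_eq_negaQ_const: "negaq q a = negaQ (\<lambda>_. q) a"
proof -
  have "real (a (Suc n)) / (- real q) ^ Suc n = (-1) ^ Suc n * real (a (Suc n)) / prodQ (\<lambda>_. q) (Suc n)" for n
    by (cases "even n") (simp_all add: prodQ_def power_minus[of "real q"])
  then show ?thesis unfolding negaq_def negaQ_def by simp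
qed

lemma fmap_eq_id:
  assumes Q: "cantor_bases Q" and const: "\<forall>n\<ge>1. Q n = q" and x: "x \<in> {a0 Q - 1..a0 Q}"
  shows "fmap Q q x = x"
proof -
  obtain e where e: "used_repr Q e" and x: "negaQ Q e = x"
    using ex_used_repr[OF Q] x negaQ_interval[OF Q] by auto
  have "fmap Q q x = negaQ (\<lambda>_. q) e"
    using fmap_negaQ[OF Q e] x negaq_eq_negaQ_const by simp
  also have "\<dots> = x"
    using negaQ_cong_bases[of Q "\<lambda>_. q" e] const x by simp
  finally show ?thesis .
qed

section \<open>Continuity at nega-\<open>Q\<close>-irrational points and for constant bases\<close>

definition splice_digits :: "nat \<Rightarrow> (nat \<Rightarrow> nat) \<Rightarrow> nat \<Rightarrow> (nat \<Rightarrow> nat) \<Rightarrow> nat \<Rightarrow> nat" where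
  "splice_digits n e c t k = (if k < n then e k else if k = n then c else t (k - n))"

lemma valid_splice_digits:
  assumes "valid_digits Q e" "c < Q n" "valid_digits (shift_seq n Q) t"
  shows "valid_digits Q (splice_digits n e c t)"
  unfolding valid_digits_def
proof (intro allI impI)
  fix k :: nat assume "1 \<le> k"
  then show "splice_digits n e c t k < Q k"
    using assms unfolding valid_digits_def splice_digits_def shift_seq_def
    by (cases "k < n"; cases "k = n") (auto dest: spec[of _ "k - n"])
qed

lemma shift_splice_digits: "1 \<le> i \<Longrightarrow> shift_seq n (splice_digits n e c t) i = t i"
  by (simp add: shift_seq_def splice_digits_def)

lemma tail_eq_min_imp_negaQ_rational:
  assumes Q: "cantor_bases Q" and e: "valid_digits Q e" and n: "1 \<le> n" and en: "1 \<le> e n"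
    and tail: "negaQ (shift_seq n Q) (shift_seq n e) = negaQ_min (shift_seq n Q)"
  shows "negaQ_rational Q (negaQ Q e)"
proof -
  define e' where "e' = splice_digits n e (e n - 1) (max_digits (shift_seq n Q))"
  have e': "valid_digits Q e'"
    unfolding e'_def using e n en
    by (intro valid_splice_digits valid_max_digits cantor_bases_shift Q)
       (auto simp: valid_digits_def)
  have "rational_pair Q e e' n"
    unfolding rational_pair_iff
    using n en tail negaQ_eq_min_iff[OF valid_digits_shift[OF e] cantor_bases_shift[OF Q]]
    by (auto simp: e'_def shift_splice_digits) (simp add: splice_digits_def)+
  then show ?thesis
    unfolding negaQ_rational_def using e e' rational_pair_negaQ_eq[OF e e' Q] by metis
qed

lemma tail_eq_max_imp_second_of_pair:
  assumes Q: "cantor_bases Q" and e: "valid_digits Q e" and n: "1 \<le> n" and en: "e n + 1 < Q n"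
    and tail: "negaQ (shift_seq n Q) (shift_seq n e) = negaQ_max (shift_seq n Q)"
  shows "\<exists>e'. valid_digits Q e' \<and> rational_pair Q e' e n"
proof -
  define e' where "e' = splice_digits n e (e n + 1) (min_digits (shift_seq n Q))"
  have e': "valid_digits Q e'"
    unfolding e'_def using e en
    by (intro valid_splice_digits valid_min_digits cantor_bases_shift Q) auto
  have "rational_pair Q e' e n"
    unfolding rational_pair_iff
    using n tail negaQ_eq_max_iff[OF valid_digits_shift[OF e] cantor_bases_shift[OF Q]]
    by (auto simp: e'_def shift_splice_digits) (simp add: splice_digits_def)+
  then show ?thesis using e' by blast
qed

text \<open>The gap is positive because the tail of \<open>e\<close> after place \<open>n\<close> is not extremal: a minimal tail
  would make \<open>negaQ Q e\<close> rational, a maximal one would make \<open>e\<close> a second representation.\<close>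

lemma negaQ_gap_at_first_difference:
  assumes Q: "cantor_bases Q" and e: "used_repr Q e" and irr: "\<not> negaQ_rational Q (negaQ Q e)"
    and n: "1 \<le> n"
  obtains g where "0 < g"
    and "\<And>d. valid_digits Q d \<Longrightarrow> \<forall>k. 1 \<le> k \<and> k < n \<longrightarrow> e k = d k \<Longrightarrow> d n \<noteq> e n
      \<Longrightarrow> g \<le> \<bar>negaQ Q d - negaQ Q e\<bar>"
proof -
  let ?Q = "shift_seq n Q"
  let ?S = "negaQ ?Q (shift_seq n e)"
  have ve: "valid_digits Q e" using e by (simp add: used_repr_def)
  define below where "below = (if 1 \<le> e n then ?S - negaQ_min ?Q else 1)"
  define above where "above = (if e n + 1 < Q n then negaQ_max ?Q - ?S else 1)"
  have "?S \<noteq> negaQ_min ?Q" if "1 \<le> e n"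
    using tail_eq_min_imp_negaQ_rational[OF Q ve n that] irr by blast
  moreover have "?S \<noteq> negaQ_max ?Q" if "e n + 1 < Q n"
    using tail_eq_max_imp_second_of_pair[OF Q ve n that] e by (auto simp: used_repr_def)
  ultimately have pos: "0 < below" "0 < above"
    using negaQ_shift_bounds[OF ve Q, of n] unfolding below_def above_def by auto
  have P: "0 < prodQ Q n" using prodQ_pos[OF Q] .
  show thesis
  proof (rule that[of "min below above / prodQ Q n"])
    show "0 < min below above / prodQ Q n" using pos P by simp
    fix d assume d: "valid_digits Q d" and agree: "\<forall>k. 1 \<le> k \<and> k < n \<longrightarrow> e k = d k"
      and neq: "d n \<noteq> e n"
    let ?D = "real (e n) - real (d n) + (?S - negaQ ?Q (shift_seq n d))"
    have "\<bar>negaQ Q e - negaQ Q d\<bar> = \<bar>?D\<bar> / prodQ Q n"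
      using negaQ_diff_first_difference[OF ve d Q n agree] P
      by (simp add: abs_mult abs_divide power_abs)
    then have "\<bar>negaQ Q d - negaQ Q e\<bar> = \<bar>?D\<bar> / prodQ Q n"
      by (simp add: abs_minus_commute)
    moreover have "min below above \<le> \<bar>?D\<bar>"
    proof (cases "d n < e n")
      case True
      then have "1 \<le> real (e n) - real (d n)" "below = ?S - negaQ_min ?Q"
        unfolding below_def by auto
      then have "below \<le> \<bar>?D\<bar>"
        using negaQ_shift_bounds[OF d Q, of n] negaQ_max_minus_min[OF cantor_bases_shift[OF Q, of n]]
        by linarith
      then show ?thesis by (simp add: min.coboundedI1)
    next
      case False
      then have "e n + 1 < Q n"
        using neq d n by (auto simp: valid_digits_def)
      moreover have "real (e n) - real (d n) \<le> -1" using False neq by linarith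
      ultimately have "above \<le> \<bar>?D\<bar>"
        using negaQ_shift_bounds[OF d Q, of n] negaQ_max_minus_min[OF cantor_bases_shift[OF Q, of n]]
        unfolding above_def by auto
      then show ?thesis by (simp add: min.coboundedI2)
    qed
    ultimately show "min below above / prodQ Q n \<le> \<bar>negaQ Q d - negaQ Q e\<bar>"
      using P by (simp add: divide_right_mono)
  qed
qed

lemma used_repr_prefix_locally_constant:
  assumes Q: "cantor_bases Q" and e: "used_repr Q e" and irr: "\<not> negaQ_rational Q (negaQ Q e)"
  shows "\<exists>\<delta>>0. \<forall>d. used_repr Q d \<and> \<bar>negaQ Q d - negaQ Q e\<bar> < \<delta>
    \<longrightarrow> (\<forall>k. 1 \<le> k \<and> k \<le> N \<longrightarrow> d k = e k)"
proof (induction N)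
  case 0
  show ?case by (intro exI[of _ 1]) auto
next
  case (Suc N)
  then obtain \<delta> where \<delta>: "0 < \<delta>" and prefix: "\<And>d. used_repr Q d \<Longrightarrow> \<bar>negaQ Q d - negaQ Q e\<bar> < \<delta>
      \<Longrightarrow> \<forall>k. 1 \<le> k \<and> k \<le> N \<longrightarrow> d k = e k"
    by blast
  obtain g where g: "0 < g" and gap: "\<And>d. valid_digits Q d \<Longrightarrow> \<forall>k. 1 \<le> k \<and> k < Suc N \<longrightarrow> e k = d k
      \<Longrightarrow> d (Suc N) \<noteq> e (Suc N) \<Longrightarrow> g \<le> \<bar>negaQ Q d - negaQ Q e\<bar>"
    using negaQ_gap_at_first_difference[OF Q e irr, of "Suc N"] by auto
  show ?case
  proof (intro exI[of _ "min \<delta> g"] conjI allI impI)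
    show "0 < min \<delta> g" using \<delta> g by simp
    fix d k assume d: "used_repr Q d \<and> \<bar>negaQ Q d - negaQ Q e\<bar> < min \<delta> g"
      and k: "1 \<le> k \<and> k \<le> Suc N"
    have agree: "\<forall>k. 1 \<le> k \<and> k \<le> N \<longrightarrow> d k = e k" using prefix d by auto
    moreover have "d (Suc N) = e (Suc N)"
      using gap[of d] agree d by (force simp: used_repr_def)
    ultimately show "d k = e k" using k le_Suc_eq by auto
  qed
qed

lemma fmap_continuous_at_irrational:
  assumes Q: "cantor_bases Q" and Qle: "\<forall>k\<ge>1. Q k \<le> q" and q: "2 \<le> q"
    and x0: "x0 \<in> {a0 Q - 1..a0 Q}" and irr: "\<not> negaQ_rational Q x0"
  shows "continuous (at x0 within {a0 Q - 1..a0 Q}) (fmap Q q)"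
  unfolding continuous_within_eps_delta
proof (intro allI impI)
  fix \<epsilon> :: real assume "0 < \<epsilon>"
  then obtain N where N: "(1 / 2) ^ N < \<epsilon>"
    using real_arch_pow_inv[of \<epsilon> "1 / 2"] by auto
  obtain e where e: "used_repr Q e" and x0e: "negaQ Q e = x0"
    using ex_used_repr[OF Q] x0 negaQ_interval[OF Q] by auto
  obtain \<delta> where "0 < \<delta>" and prefix: "\<And>d. used_repr Q d \<Longrightarrow> \<bar>negaQ Q d - negaQ Q e\<bar> < \<delta>
      \<Longrightarrow> \<forall>k. 1 \<le> k \<and> k \<le> N \<longrightarrow> d k = e k"
    using used_repr_prefix_locally_constant[OF Q e] irr x0e by blast
  have C: "cantor_bases (\<lambda>_. q)" using cantor_bases_const[OF q] .
  show "\<exists>\<delta>>0. \<forall>y\<in>{a0 Q - 1..a0 Q}. dist y x0 < \<delta> \<longrightarrow> dist (fmap Q q y) (fmap Q q x0) < \<epsilon>"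
  proof (intro exI conjI ballI impI)
    show "0 < \<delta>" by fact
    fix y assume "y \<in> {a0 Q - 1..a0 Q}" and y_near: "dist y x0 < \<delta>"
    then obtain d where d: "used_repr Q d" and yd: "negaQ Q d = y"
      using ex_used_repr[OF Q] negaQ_interval[OF Q] by auto
    have agree: "\<forall>k. 1 \<le> k \<and> k \<le> N \<longrightarrow> d k = e k"
      using prefix[OF d] y_near yd x0e by (simp add: dist_real_def)
    have valid: "valid_digits (\<lambda>_. q) d" "valid_digits (\<lambda>_. q) e"
      using d e Qle by (auto simp: used_repr_def intro: valid_digits_mono_bases)
    have "dist (fmap Q q y) (fmap Q q x0) = \<bar>negaQ (\<lambda>_. q) d - negaQ (\<lambda>_. q) e\<bar>"
      using fmap_negaQ[OF Q d] fmap_negaQ[OF Q e] yd x0e by (simp add: negaq_eq_negaQ_const dist_real_def)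
    also have "\<dots> \<le> 1 / prodQ (\<lambda>_. q) N"
      using abs_negaQ_diff_le_common_prefix[OF valid C agree] .
    also have "\<dots> < \<epsilon>"
      using inverse_prodQ_le[OF C, of N] N by linarith
    finally show "dist (fmap Q q y) (fmap Q q x0) < \<epsilon>" .
  qed
qed

lemma fmap_continuous_of_const_bases:
  assumes Q: "cantor_bases Q" and const: "\<forall>n\<ge>1. Q n = q" and x: "x \<in> {a0 Q - 1..a0 Q}"
  shows "continuous (at x within {a0 Q - 1..a0 Q}) (fmap Q q)"
  by (rule continuous_transform_within[of _ _ id 1])
     (use x fmap_eq_id[OF Q const] in auto)

section \<open>Discontinuity at nega-\<open>Q\<close>-rational points\<close>

lemma negaQ_const_max_minus_min_less_one:
  assumes Q: "cantor_bases Q" and q: "2 \<le> q" and Qle: "\<forall>k\<ge>1. Q k \<le> q" and less: "Q (Suc i) < q"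
  shows "negaQ (\<lambda>_. q) (max_digits Q) - negaQ (\<lambda>_. q) (min_digits Q) < 1"
proof -
  let ?P = "\<lambda>k. prodQ (\<lambda>_. q) (Suc k)"
  let ?f = "\<lambda>k. (real q - 1) / ?P k - (real (Q (Suc k)) - 1) / ?P k"
  have C: "cantor_bases (\<lambda>_. q)" using cantor_bases_const[OF q] .
  have f: "?f sums (1 - (negaQ (\<lambda>_. q) (max_digits Q) - negaQ (\<lambda>_. q) (min_digits Q)))"
    using sums_diff[OF sums_max_terms_one[OF C] sums_negaQ_max_minus_min[OF C Q Qle]] by simp
  have f_eq: "?f k = (real q - real (Q (Suc k))) / ?P k" for k
    by (simp add: diff_divide_distrib)
  have "0 \<le> ?f k" for k
    unfolding f_eq using Qle prodQ_pos[OF C, of "Suc k"] by (simp add: divide_nonneg_pos)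
  moreover have "0 < ?f i"
    unfolding f_eq using less prodQ_pos[OF C, of "Suc i"] by simp
  ultimately have "0 < suminf ?f"
    by (intro suminf_pos2 sums_summable[OF f])
  then show ?thesis using sums_unique[OF f] by simp
qed

lemma negaq_rational_pair_neq:
  assumes Q: "cantor_bases Q" and Qle: "\<forall>k\<ge>1. Q k \<le> q" and q: "2 \<le> q"
    and e: "valid_digits Q e" and e': "valid_digits Q e'" and pair: "rational_pair Q e e' m"
    and n: "m < n" and less: "Q n < q"
  shows "negaq q e \<noteq> negaq q e'"
proof -
  let ?C = "\<lambda>_::nat. q" and ?Q = "shift_seq m Q"
  have C: "cantor_bases ?C" using cantor_bases_const[OF q] .
  have m: "1 \<le> m" and pre: "\<forall>k. 1 \<le> k \<and> k < m \<longrightarrow> e k = e' k"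
    and digit: "real (e m) - real (e' m) = 1"
    and tails: "negaQ ?C (shift_seq m e) = negaQ ?C (min_digits ?Q)"
      "negaQ ?C (shift_seq m e') = negaQ ?C (max_digits ?Q)"
    using pair unfolding rational_pair_iff by (auto intro: negaQ_cong)
  have "?Q (Suc (n - m - 1)) < q" using n less by (simp add: shift_seq_def)
  then have T: "negaQ ?C (max_digits ?Q) - negaQ ?C (min_digits ?Q) < 1"
    using negaQ_const_max_minus_min_less_one[OF cantor_bases_shift[OF Q] q] Qle
    by (simp add: shift_seq_def)
  have "negaQ ?C e - negaQ ?C e' = (-1) ^ m / prodQ ?C m *
      (1 - (negaQ ?C (max_digits ?Q) - negaQ ?C (min_digits ?Q)))"
    using negaQ_diff_first_difference[OF _ _ C m pre] e e' Qle digit tails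
    by (simp add: valid_digits_mono_bases)
  then have "negaQ ?C e \<noteq> negaQ ?C e'"
    using T prodQ_pos[OF C, of m] by auto
  then show ?thesis by (simp add: negaq_eq_negaQ_const)
qed

lemma negaQ_LIMSEQ_of_prefixes:
  assumes Q: "cantor_bases Q" and e: "valid_digits Q e" and z: "\<And>N. valid_digits Q (z N)"
    and agree: "\<And>N. \<forall>k. 1 \<le> k \<and> k \<le> N \<longrightarrow> z N k = e k"
  shows "(\<lambda>N. negaQ Q (z N)) \<longlonglongrightarrow> negaQ Q e"
proof (rule LIM_zero_cancel, rule Lim_null_comparison[OF _ inverse_prodQ_LIMSEQ[OF Q]])
  show "\<forall>\<^sub>F N in sequentially. norm (negaQ Q (z N) - negaQ Q e) \<le> 1 / prodQ Q N"
    using abs_negaQ_diff_le_common_prefix[OF z e Q agree] by (simp add: always_eventually)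
qed

lemma fmap_discontinuous_at_rational:
  assumes Q: "cantor_bases Q" and Qle: "\<forall>k\<ge>1. Q k \<le> q" and q: "2 \<le> q"
    and e: "valid_digits Q e" and e': "valid_digits Q e'" and pair: "rational_pair Q e e' m"
    and n: "m < n" and less: "Q n < q"
  shows "\<not> continuous (at (negaQ Q e) within {a0 Q - 1..a0 Q}) (fmap Q q)"
proof
  assume cont: "continuous (at (negaQ Q e) within {a0 Q - 1..a0 Q}) (fmap Q q)"
  have C: "cantor_bases (\<lambda>_. q)" using cantor_bases_const[OF q] .
  have "fmap Q q (negaQ Q e) = negaq q (e(0 := 0))"
    using fmap_negaQ[OF Q used_repr_of_rational_pair[OF Q e pair]] by simp
  also have "\<dots> = negaq q e" by (simp add: negaq_def)
  finally have fx0: "fmap Q q (negaQ Q e) = negaq q e" .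
  \<comment> \<open>truncations of the second representation: used representations, since they end in zeros\<close>
  define z where "z N k = (if 1 \<le> k \<and> k \<le> N then e' k else 0)" for N k
  have agree: "\<forall>k. 1 \<le> k \<and> k \<le> N \<longrightarrow> z N k = e' k" for N
    by (simp add: z_def)
  have z: "valid_digits Q (z N)" for N
    unfolding valid_digits_def
  proof (intro allI impI)
    fix k :: nat assume "1 \<le> k"
    then show "z N k < Q k"
      using e' cantor_bases_ge2[OF Q, of k] by (simp add: valid_digits_def z_def)
  qed
  have "used_repr Q (z N)" for N
  proof -
    have "\<not> rational_pair Q d (z N) m'" for d m'
    proof
      assume "rational_pair Q d (z N) m'"
      then have "z N (m' + 2 * N + 2) = Q (m' + 2 * N + 2) - 1" unfolding rational_pair_def by blast
      then show False using cantor_bases_ge2[OF Q, of "m' + 2 * N + 2"] by (simp add: z_def)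
    qed
    then show ?thesis using z by (simp add: used_repr_def z_def)
  qed
  then have fz: "fmap Q q (negaQ Q (z N)) = negaq q (z N)" for N
    using fmap_negaQ[OF Q] by blast
  have "(\<lambda>N. negaQ Q (z N)) \<longlonglongrightarrow> negaQ Q e"
    using negaQ_LIMSEQ_of_prefixes[OF Q e' z agree] rational_pair_negaQ_eq[OF e e' Q pair] by simp
  moreover have "negaQ Q (z N) \<in> {a0 Q - 1..a0 Q}" for N
    using negaQ_ge_min[OF z Q] negaQ_le_max[OF z Q] negaQ_interval[OF Q] by auto
  ultimately have "(fmap Q q \<circ> (\<lambda>N. negaQ Q (z N))) \<longlonglongrightarrow> fmap Q q (negaQ Q e)"
    using cont[unfolded continuous_within_sequentially, rule_format, of "\<lambda>N. negaQ Q (z N)"]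
    by blast
  then have "(\<lambda>N. negaq q (z N)) \<longlonglongrightarrow> negaq q e"
    by (simp add: comp_def fz fx0)
  moreover have "(\<lambda>N. negaq q (z N)) \<longlonglongrightarrow> negaq q e'"
    unfolding negaq_eq_negaQ_const
    using negaQ_LIMSEQ_of_prefixes[OF C valid_digits_mono_bases[OF e' Qle]
        valid_digits_mono_bases[OF z Qle] agree] .
  ultimately show False
    using LIMSEQ_unique negaq_rational_pair_neq[OF Q Qle q e e' pair n less] by blast
qed

theorem theorem3:
  fixes Q :: "nat \<Rightarrow> nat" and q :: nat
  assumes Qge: "\<forall>k\<ge>1. 2 \<le> Q k"
    and Qle: "\<forall>k\<ge>1. Q k \<le> q"
    and q2: "2 \<le> q"
  shows "(\<forall>x\<in>{a0 Q - 1..a0 Q}. \<not> negaQ_rational Q x \<longrightarrow>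
            continuous (at x within {a0 Q - 1..a0 Q}) (fmap Q q))
       \<and> ((\<forall>n\<ge>1. Q n = q) \<longrightarrow>
            (\<forall>x\<in>{a0 Q - 1..a0 Q}. continuous (at x within {a0 Q - 1..a0 Q}) (fmap Q q)))
       \<and> (\<forall>eps eps' m. valid_digits Q eps \<and> valid_digits Q eps' \<and> rational_pair Q eps eps' m
            \<and> (\<exists>n>m. Q n < q) \<longrightarrow>
            \<not> continuous (at (negaQ Q eps) within {a0 Q - 1..a0 Q}) (fmap Q q))"
proof -
  have Q: "cantor_bases Q" using Qge by (simp add: cantor_bases_def)
  show ?thesis
    using fmap_continuous_at_irrational[OF Q Qle q2] fmap_continuous_of_const_bases[OF Q]
      fmap_discontinuous_at_rational[OF Q Qle q2] by blast
qed

end
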